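(* Let $h,b>0$, $\rho=b/(h+b)$ and $0<\alpha\le\min\{1/2,2\rho,2(1-\rho)\}$. Let $\Theta=[-\alpha/20,\alpha/20]$ and for $\theta\in\Theta$ set $l_1(\theta)=\frac{4\rho-\alpha}{16-8\alpha}+\theta$, $l_2(\theta)=l_1(\theta)+\rho/2$, $r_2(\theta)=l_2(\theta)+1/4$, $r_1(\theta)=r_2(\theta)+(1-\rho)/2$, $w_1=2\pi/\rho$, $w_2=2\pi/(1-\rho)$. Define the density $f(x|\theta)=0$ for $x\notin[0,1]$ and, for $x\in[0,1]$: $f(x|\theta)=2-\alpha$ on $[0,l_1(\theta)]\cup[r_1(\theta),1]$; $f(x|\theta)=\alpha$ on $(l_2(\theta),r_2(\theta)]$; $f(x|\theta)=\alpha+(1-\alpha)(\cos(w_1(x-l_1(\theta)))+1)$ on $[l_1(\theta),l_2(\theta)]$; $f(x|\theta)=\alpha+(1-\alpha)(\cos(w_2(r_1(\theta)-x))+1)$ on $[r_2(\theta),r_1(\theta)]$. Let $x_\theta^*$ be the minimizer of $C_\theta(x)=\mathbb{E}_{X\sim f(\cdot|\theta)}[h(x-X)^++b(X-x)^+]$. Then for every $\theta\in\Theta$, $x_\theta^*\in[l_2(\theta),r_2(\theta)]$ and $$x_\theta^*=\frac{\rho}{2}+\frac{4\rho-\alpha}{16-8\alpha}+\frac18-\left(\frac2\alpha-2\right)\theta.$$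
   Context: For linear overage cost $h$ and underage cost $b$, the minimizer of the expected cost is the $\rho$-quantile of the demand distribution. *)

theory Defs
  imports "HOL-Analysis.Analysis"
begin

definition l1 :: "real \<Rightarrow> real \<Rightarrow> real \<Rightarrow> real" where
  "l1 \<rho> \<alpha> \<theta> = (4*\<rho> - \<alpha>) / (16 - 8*\<alpha>) + \<theta>"

definition l2 :: "real \<Rightarrow> real \<Rightarrow> real \<Rightarrow> real" where
  "l2 \<rho> \<alpha> \<theta> = l1 \<rho> \<alpha> \<theta> + \<rho>/2"

definition r2 :: "real \<Rightarrow> real \<Rightarrow> real \<Rightarrow> real" where
  "r2 \<rho> \<alpha> \<theta> = l2 \<rho> \<alpha> \<theta> + 1/4"

definition r1 :: "real \<Rightarrow> real \<Rightarrow> real \<Rightarrow> real" where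
  "r1 \<rho> \<alpha> \<theta> = r2 \<rho> \<alpha> \<theta> + (1-\<rho>)/2"

definition w1 :: "real \<Rightarrow> real" where "w1 \<rho> = 2*pi/\<rho>"
definition w2 :: "real \<Rightarrow> real" where "w2 \<rho> = 2*pi/(1-\<rho>)"

text \<open>The density f(x|theta); the pieces agree at the shared endpoints.\<close>
definition dens :: "real \<Rightarrow> real \<Rightarrow> real \<Rightarrow> real \<Rightarrow> real" where
  "dens \<rho> \<alpha> \<theta> x =
    (if x < 0 \<or> x > 1 then 0
     else if x \<le> l1 \<rho> \<alpha> \<theta> then 2 - \<alpha>
     else if r1 \<rho> \<alpha> \<theta> \<le> x then 2 - \<alpha>
     else if x \<le> l2 \<rho> \<alpha> \<theta> then \<alpha> + (1-\<alpha>) * (cos (w1 \<rho> * (x - l1 \<rho> \<alpha> \<theta>)) + 1)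
     else if x \<le> r2 \<rho> \<alpha> \<theta> then \<alpha>
     else \<alpha> + (1-\<alpha>) * (cos (w2 \<rho> * (r1 \<rho> \<alpha> \<theta> - x)) + 1))"

definition cost :: "real \<Rightarrow> real \<Rightarrow> real \<Rightarrow> real \<Rightarrow> real \<Rightarrow> real \<Rightarrow> real" where
  "cost h b \<rho> \<alpha> \<theta> x =
    (LINT X|lborel. dens \<rho> \<alpha> \<theta> X * (h * max (x - X) 0 + b * max (X - x) 0))"

end

theory Submission
  imports Defs
begin

text \<open>Writing the loss at order quantity y as its linearisation at x plus a nonnegative excess,
  C(y) - C(x) = (y - x)((h + b) F(x) - b) + (h + b) E, where F is the demand CDF and E is the
  expected excess. If F(x) = \<rho> = b/(h + b) the first term vanishes, and E > 0 for y \<noteq> x as soon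
  as the density is bounded below near x. For f(.|\<theta>) the cosine bump on [l1, l2] integrates to
  its length \<rho>/2 over a half period, so F(x) = (2 - \<alpha>) l1 + \<rho>/2 + \<alpha> (x - l2) on [l2, r2], and
  this equals \<rho> exactly at the stated point.\<close>

definition nv_loss :: "real \<Rightarrow> real \<Rightarrow> real \<Rightarrow> real \<Rightarrow> real" where
  "nv_loss h b x X = h * max (x - X) 0 + b * max (X - x) 0"

lemma cost_eq_integral_nv_loss:
  "cost h b \<rho> \<alpha> \<theta> x = (LINT X|lborel. dens \<rho> \<alpha> \<theta> X * nv_loss h b x X)"
  by (simp add: cost_def nv_loss_def)

lemma nv_loss_linearization:
  "nv_loss h b y X = nv_loss h b x X + (y - x) * (if X \<le> x then h else - b)
     + (h + b) * (if X \<le> x then max (X - y) 0 else max (y - X) 0)"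
  by (auto simp: nv_loss_def max_def algebra_simps)

lemma abs_nv_loss_le: "\<bar>nv_loss h b y X\<bar> \<le> (\<bar>h\<bar> + \<bar>b\<bar>) * \<bar>y - X\<bar>"
  by (auto simp: nv_loss_def max_def abs_mult distrib_right)

lemma integrable_bounded_density_nv_loss:
  fixes D :: "real \<Rightarrow> real"
  assumes D: "D \<in> borel_measurable lborel" and bounded: "\<And>X. \<bar>D X\<bar> \<le> M"
    and support: "\<And>X. X \<notin> {a..c} \<Longrightarrow> D X = 0"
  shows "integrable lborel (\<lambda>X. D X * nv_loss h b y X)"
proof (rule integrableI_bounded_set[where A = "{a..c}" and B = "M * ((\<bar>h\<bar> + \<bar>b\<bar>) * (\<bar>y\<bar> + \<bar>a\<bar> + \<bar>c\<bar>))"])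
  show "(\<lambda>X. D X * nv_loss h b y X) \<in> borel_measurable lborel"
    using D unfolding nv_loss_def by measurable
  show "AE X in lborel. X \<in> {a..c} \<longrightarrow> norm (D X * nv_loss h b y X) \<le> M * ((\<bar>h\<bar> + \<bar>b\<bar>) * (\<bar>y\<bar> + \<bar>a\<bar> + \<bar>c\<bar>))"
  proof (intro AE_I2 impI)
    fix X :: real assume "X \<in> {a..c}"
    then have "(\<bar>h\<bar> + \<bar>b\<bar>) * \<bar>y - X\<bar> \<le> (\<bar>h\<bar> + \<bar>b\<bar>) * (\<bar>y\<bar> + \<bar>a\<bar> + \<bar>c\<bar>)"
      by (intro mult_left_mono) auto
    then have "\<bar>nv_loss h b y X\<bar> \<le> (\<bar>h\<bar> + \<bar>b\<bar>) * (\<bar>y\<bar> + \<bar>a\<bar> + \<bar>c\<bar>)"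
      using abs_nv_loss_le[of h b y X] by linarith
    then show "norm (D X * nv_loss h b y X) \<le> M * ((\<bar>h\<bar> + \<bar>b\<bar>) * (\<bar>y\<bar> + \<bar>a\<bar> + \<bar>c\<bar>))"
      using bounded[of X] by (simp add: abs_mult mult_mono)
  qed
  show "AE X in lborel. X \<notin> {a..c} \<longrightarrow> D X * nv_loss h b y X = 0"
    using support by simp
  show "emeasure lborel {a..c} < \<infinity>"
    using emeasure_lborel_cbox_finite[of a c] by simp
qed simp

lemma has_integral_pos_of_lower_bound:
  fixes f :: "real \<Rightarrow> real"
  assumes f: "(f has_integral I) UNIV" and nonneg: "\<And>x. 0 \<le> f x"
    and "p < q" "0 < c" and lower: "\<And>x. x \<in> {p..q} \<Longrightarrow> c \<le> f x"
  shows "0 < I"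
proof -
  have "((\<lambda>x. if x \<in> {p..q} then c else 0) has_integral c * (q - p)) UNIV"
    unfolding has_integral_restrict_UNIV
    using has_integral_const_real[of c p q] \<open>p < q\<close> by (simp add: mult.commute)
  then have "c * (q - p) \<le> I"
    by (rule has_integral_le[OF _ f]) (use nonneg lower in auto)
  moreover have "0 < c * (q - p)" using \<open>p < q\<close> \<open>0 < c\<close> by simp
  ultimately show ?thesis by linarith
qed

theorem newsvendor_quantile_unique_minimizer:
  fixes D :: "real \<Rightarrow> real"
  assumes "0 < h" "0 < b"
    and D_nonneg: "\<And>X. 0 \<le> D X"
    and D_total: "(D has_integral 1) UNIV"
    and D_cdf: "(D has_integral b / (h + b)) {..x}"
    and D_lower: "\<And>X. X \<in> {lo..hi} \<Longrightarrow> c \<le> D X" and "0 < c" "lo < x" "x < hi"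
    and integrable: "\<And>z. integrable lborel (\<lambda>X. D X * nv_loss h b z X)"
    and "y \<noteq> x"
  shows "(LINT X|lborel. D X * nv_loss h b x X) < (LINT X|lborel. D X * nv_loss h b y X)"
proof -
  define C where "C z = (LINT X|lborel. D X * nv_loss h b z X)" for z
  define E where "E X = (if X \<le> x then max (X - y) 0 else max (y - X) 0)" for X
  have C: "((\<lambda>X. D X * nv_loss h b z X) has_integral C z) UNIV" for z
    unfolding C_def by (rule has_integral_integral_lborel[OF integrable])
  have "((\<lambda>X. (h + b) * (if X \<in> {..x} then D X else 0) - b * D X)
      has_integral (h + b) * (b / (h + b)) - b * 1) UNIV"
    using has_integral_restrict_UNIV[THEN iffD2, OF D_cdf] D_total
    by (intro has_integral_diff has_integral_mult_right)
  moreover have "(h + b) * (b / (h + b)) - b * 1 = 0" using assms(1,2) by simp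
  moreover have "(\<lambda>X. (h + b) * (if X \<in> {..x} then D X else 0) - b * D X)
      = (\<lambda>X. D X * (if X \<le> x then h else - b))"
    by (auto simp: algebra_simps)
  ultimately have slope: "((\<lambda>X. D X * (if X \<le> x then h else - b)) has_integral 0) UNIV"
    by simp
  have "((\<lambda>X. D X * nv_loss h b y X - D X * nv_loss h b x X - (y - x) * (D X * (if X \<le> x then h else - b)))
      has_integral C y - C x - (y - x) * 0) UNIV"
    by (intro has_integral_diff C has_integral_mult_right slope)
  then have excess: "((\<lambda>X. (h + b) * (D X * E X)) has_integral C y - C x) UNIV"
    by (simp add: nv_loss_linearization[of h b y _ x] E_def algebra_simps)
  define \<delta> where "\<delta> = min \<bar>y - x\<bar> (min (x - lo) (hi - x))"
  have \<delta>: "0 < \<delta>" "\<delta> \<le> \<bar>y - x\<bar>" "\<delta> \<le> x - lo" "\<delta> \<le> hi - x"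
    using \<open>y \<noteq> x\<close> \<open>lo < x\<close> \<open>x < hi\<close> by (auto simp: \<delta>_def)
  obtain p q where "p < q" "{p..q} \<subseteq> {lo..hi}" and E_lower: "\<And>X. X \<in> {p..q} \<Longrightarrow> \<delta>/2 \<le> E X"
  proof (cases "x < y")
    case True
    then show ?thesis using \<delta>
      by (intro that[of "x + \<delta>/4" "x + \<delta>/2"]) (auto simp: E_def le_max_iff_disj)
  next
    case False
    then show ?thesis using \<delta> \<open>y \<noteq> x\<close>
      by (intro that[of "x - \<delta>/2" "x - \<delta>/4"]) (auto simp: E_def le_max_iff_disj)
  qed
  have "0 < C y - C x"
  proof (rule has_integral_pos_of_lower_bound[OF excess _ \<open>p < q\<close>])
    show "0 \<le> (h + b) * (D X * E X)" for X
      using assms(1,2) D_nonneg[of X] by (simp add: E_def)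
    show "0 < (h + b) * (c * (\<delta>/2))" using assms(1,2) \<open>0 < c\<close> \<open>0 < \<delta>\<close> by simp
    show "(h + b) * (c * (\<delta>/2)) \<le> (h + b) * (D X * E X)" if "X \<in> {p..q}" for X
      using D_lower[of X] E_lower[OF that] \<open>{p..q} \<subseteq> {lo..hi}\<close> that assms(1,2) \<open>0 < c\<close> \<open>0 < \<delta>\<close>
      by (intro mult_left_mono mult_mono) auto
  qed
  then show ?thesis unfolding C_def by simp
qed

lemma has_integral_one_plus_cos:
  fixes a b c w p :: real
  assumes "a \<le> b" "w \<noteq> 0" "sin (w * (a - p)) = sin (w * (b - p))"
  shows "((\<lambda>x. 1 + c * cos (w * (x - p))) has_integral b - a) {a..b}"
proof -
  define G where "G x = x + c * sin (w * (x - p)) / w" for x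
  have "(G has_real_derivative 1 + c * cos (w * (x - p))) (at x)" for x
    unfolding G_def using assms(2) by (auto intro!: derivative_eq_intros)
  then have "((\<lambda>x. 1 + c * cos (w * (x - p))) has_integral G b - G a) {a..b}"
    using assms(1) by (intro fundamental_theorem_of_calculus)
      (auto simp: has_real_derivative_iff_has_vector_derivative[symmetric] intro: has_field_derivative_at_within)
  then show ?thesis using assms(3) by (simp add: G_def)
qed

lemma dens_measurable: "dens \<rho> \<alpha> \<theta> \<in> borel_measurable lborel"
  unfolding dens_def by measurable

lemma dens_eq_0: "X \<notin> {0..1} \<Longrightarrow> dens \<rho> \<alpha> \<theta> X = 0"
  by (auto simp: dens_def)

definition x_opt :: "real \<Rightarrow> real \<Rightarrow> real \<Rightarrow> real" where
  "x_opt \<rho> \<alpha> \<theta> = \<rho>/2 + (4*\<rho> - \<alpha>)/(16 - 8*\<alpha>) + 1/8 - (2/\<alpha> - 2)*\<theta>"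

context
  fixes \<rho> \<alpha> \<theta> :: real
  assumes params: "0 < \<alpha>" "\<alpha> \<le> 1/2" "\<alpha> \<le> 2*\<rho>" "\<alpha> \<le> 2*(1-\<rho>)" "\<bar>\<theta>\<bar> \<le> \<alpha>/20"
begin

lemma breakpoints_ordered:
  "0 < l1 \<rho> \<alpha> \<theta>" "l1 \<rho> \<alpha> \<theta> < l2 \<rho> \<alpha> \<theta>" "l2 \<rho> \<alpha> \<theta> < r2 \<rho> \<alpha> \<theta>"
  "r2 \<rho> \<alpha> \<theta> < r1 \<rho> \<alpha> \<theta>" "r1 \<rho> \<alpha> \<theta> < 1"
proof -
  have d: "0 < 16 - 8*\<alpha>" using params by simp
  have "\<alpha>/16 \<le> \<alpha>/(16 - 8*\<alpha>)" using params d by (intro divide_left_mono) auto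
  also have "\<dots> \<le> (4*\<rho> - \<alpha>) / (16 - 8*\<alpha>)" using params d by (intro divide_right_mono) auto
  finally have lower: "\<alpha>/16 \<le> (4*\<rho> - \<alpha>) / (16 - 8*\<alpha>)" .
  have "(4*\<rho> - \<alpha>) / (16 - 8*\<alpha>) \<le> (4 - 3*\<alpha>) / (16 - 8*\<alpha>)"
    using params d by (intro divide_right_mono) auto
  also have "\<dots> = 1/4 - \<alpha>/(16 - 8*\<alpha>)" using d by (simp add: field_simps)
  also have "\<dots> \<le> 1/4 - \<alpha>/16" using \<open>\<alpha>/16 \<le> \<alpha>/(16 - 8*\<alpha>)\<close> by simp
  finally have upper: "(4*\<rho> - \<alpha>) / (16 - 8*\<alpha>) \<le> 1/4 - \<alpha>/16" .
  have \<theta>: "-\<alpha>/20 \<le> \<theta>" "\<theta> \<le> \<alpha>/20" using params(5) by (auto simp: abs_le_iff)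
  have \<rho>: "0 < \<rho>" "\<rho> < 1" using params by auto
  show "0 < l1 \<rho> \<alpha> \<theta>" unfolding l1_def using lower \<theta> params(1) by linarith
  show "l1 \<rho> \<alpha> \<theta> < l2 \<rho> \<alpha> \<theta>" "l2 \<rho> \<alpha> \<theta> < r2 \<rho> \<alpha> \<theta>" "r2 \<rho> \<alpha> \<theta> < r1 \<rho> \<alpha> \<theta>"
    unfolding l2_def r2_def r1_def using \<rho> by simp_all
  have "\<rho>/2 + 1/4 + (1-\<rho>)/2 = 3/4" by (simp add: field_simps)
  then show "r1 \<rho> \<alpha> \<theta> < 1"
    unfolding r1_def r2_def l2_def l1_def using upper \<theta> params(1) by linarith
qed

lemma dens_bounds: "0 \<le> dens \<rho> \<alpha> \<theta> X" "dens \<rho> \<alpha> \<theta> X \<le> 2"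
  and dens_ge_alpha: "X \<in> {0..1} \<Longrightarrow> \<alpha> \<le> dens \<rho> \<alpha> \<theta> X"
proof -
  have bump: "0 \<le> (1-\<alpha>) * (cos t + 1)" "(1-\<alpha>) * (cos t + 1) \<le> (1-\<alpha>) * 2" for t
  proof -
    have "0 \<le> cos t + 1" "cos t + 1 \<le> 2" using cos_ge_minus_one[of t] cos_le_one[of t] by linarith+
    then show "0 \<le> (1-\<alpha>) * (cos t + 1)" "(1-\<alpha>) * (cos t + 1) \<le> (1-\<alpha>) * 2"
      using params by (intro mult_nonneg_nonneg mult_left_mono; simp)+
  qed
  show "0 \<le> dens \<rho> \<alpha> \<theta> X" "dens \<rho> \<alpha> \<theta> X \<le> 2"
    using params bump[of "w1 \<rho> * (X - l1 \<rho> \<alpha> \<theta>)"] bump[of "w2 \<rho> * (r1 \<rho> \<alpha> \<theta> - X)"]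
    unfolding dens_def by auto
  show "X \<in> {0..1} \<Longrightarrow> \<alpha> \<le> dens \<rho> \<alpha> \<theta> X"
    using params bump unfolding dens_def by auto
qed

lemma dens_has_integral_left_plateau: "(dens \<rho> \<alpha> \<theta> has_integral (2-\<alpha>) * l1 \<rho> \<alpha> \<theta>) {0..l1 \<rho> \<alpha> \<theta>}"
proof (rule has_integral_spike_interior[where a = 0 and b = "l1 \<rho> \<alpha> \<theta>", unfolded cbox_interval box_real])
  show "((\<lambda>_. 2-\<alpha>) has_integral (2-\<alpha>) * l1 \<rho> \<alpha> \<theta>) {0..l1 \<rho> \<alpha> \<theta>}"
    using has_integral_const_real[of "2-\<alpha>" 0 "l1 \<rho> \<alpha> \<theta>"] breakpoints_ordered by (simp add: mult.commute)
qed (use breakpoints_ordered in \<open>auto simp: dens_def\<close>)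

lemma dens_has_integral_left_bump: "(dens \<rho> \<alpha> \<theta> has_integral \<rho>/2) {l1 \<rho> \<alpha> \<theta>..l2 \<rho> \<alpha> \<theta>}"
proof (rule has_integral_spike_interior[where a = "l1 \<rho> \<alpha> \<theta>" and b = "l2 \<rho> \<alpha> \<theta>", unfolded cbox_interval box_real])
  have "w1 \<rho> * (l2 \<rho> \<alpha> \<theta> - l1 \<rho> \<alpha> \<theta>) = pi"
    using params by (simp add: w1_def l2_def)
  then show "((\<lambda>x. 1 + (1-\<alpha>) * cos (w1 \<rho> * (x - l1 \<rho> \<alpha> \<theta>))) has_integral \<rho>/2) {l1 \<rho> \<alpha> \<theta>..l2 \<rho> \<alpha> \<theta>}"
    using has_integral_one_plus_cos[of "l1 \<rho> \<alpha> \<theta>" "l2 \<rho> \<alpha> \<theta>" "w1 \<rho>" "l1 \<rho> \<alpha> \<theta>" "1-\<alpha>"]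
      breakpoints_ordered params by (simp add: w1_def l2_def)
  show "dens \<rho> \<alpha> \<theta> x = 1 + (1-\<alpha>) * cos (w1 \<rho> * (x - l1 \<rho> \<alpha> \<theta>))"
    if "x \<in> {l1 \<rho> \<alpha> \<theta><..<l2 \<rho> \<alpha> \<theta>}" for x
  proof -
    have "dens \<rho> \<alpha> \<theta> x = \<alpha> + (1-\<alpha>) * (cos (w1 \<rho> * (x - l1 \<rho> \<alpha> \<theta>)) + 1)"
      using that breakpoints_ordered by (simp add: dens_def)
    then show ?thesis by (simp add: algebra_simps)
  qed
qed

lemma dens_has_integral_middle:
  assumes "l2 \<rho> \<alpha> \<theta> \<le> x" "x \<le> r2 \<rho> \<alpha> \<theta>"
  shows "(dens \<rho> \<alpha> \<theta> has_integral \<alpha> * (x - l2 \<rho> \<alpha> \<theta>)) {l2 \<rho> \<alpha> \<theta>..x}"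
proof (rule has_integral_spike_interior[where a = "l2 \<rho> \<alpha> \<theta>" and b = x, unfolded cbox_interval box_real])
  show "((\<lambda>_. \<alpha>) has_integral \<alpha> * (x - l2 \<rho> \<alpha> \<theta>)) {l2 \<rho> \<alpha> \<theta>..x}"
    using has_integral_const_real[of \<alpha> "l2 \<rho> \<alpha> \<theta>" x] assms by (simp add: mult.commute)
qed (use assms breakpoints_ordered in \<open>auto simp: dens_def\<close>)

lemma dens_has_integral_right_bump: "(dens \<rho> \<alpha> \<theta> has_integral (1-\<rho>)/2) {r2 \<rho> \<alpha> \<theta>..r1 \<rho> \<alpha> \<theta>}"
proof (rule has_integral_spike_interior[where a = "r2 \<rho> \<alpha> \<theta>" and b = "r1 \<rho> \<alpha> \<theta>", unfolded cbox_interval box_real])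
  have "w2 \<rho> * (r2 \<rho> \<alpha> \<theta> - r1 \<rho> \<alpha> \<theta>) = - pi"
    using params by (simp add: w2_def r1_def)
  then show "((\<lambda>x. 1 + (1-\<alpha>) * cos (w2 \<rho> * (x - r1 \<rho> \<alpha> \<theta>))) has_integral (1-\<rho>)/2) {r2 \<rho> \<alpha> \<theta>..r1 \<rho> \<alpha> \<theta>}"
    using has_integral_one_plus_cos[of "r2 \<rho> \<alpha> \<theta>" "r1 \<rho> \<alpha> \<theta>" "w2 \<rho>" "r1 \<rho> \<alpha> \<theta>" "1-\<alpha>"]
      breakpoints_ordered params by (simp add: w2_def r1_def)
  show "dens \<rho> \<alpha> \<theta> x = 1 + (1-\<alpha>) * cos (w2 \<rho> * (x - r1 \<rho> \<alpha> \<theta>))"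
    if "x \<in> {r2 \<rho> \<alpha> \<theta><..<r1 \<rho> \<alpha> \<theta>}" for x
  proof -
    have "cos (w2 \<rho> * (r1 \<rho> \<alpha> \<theta> - x)) = cos (w2 \<rho> * (x - r1 \<rho> \<alpha> \<theta>))"
      by (metis cos_minus minus_diff_eq mult_minus_right)
    moreover have "dens \<rho> \<alpha> \<theta> x = \<alpha> + (1-\<alpha>) * (cos (w2 \<rho> * (r1 \<rho> \<alpha> \<theta> - x)) + 1)"
      using that breakpoints_ordered by (simp add: dens_def)
    ultimately show ?thesis by (simp add: algebra_simps)
  qed
qed

lemma dens_has_integral_right_plateau: "(dens \<rho> \<alpha> \<theta> has_integral (2-\<alpha>) * (1 - r1 \<rho> \<alpha> \<theta>)) {r1 \<rho> \<alpha> \<theta>..1}"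
proof (rule has_integral_spike_interior[where a = "r1 \<rho> \<alpha> \<theta>" and b = 1, unfolded cbox_interval box_real])
  show "((\<lambda>_. 2-\<alpha>) has_integral (2-\<alpha>) * (1 - r1 \<rho> \<alpha> \<theta>)) {r1 \<rho> \<alpha> \<theta>..1}"
    using has_integral_const_real[of "2-\<alpha>" "r1 \<rho> \<alpha> \<theta>" 1] breakpoints_ordered by (simp add: mult.commute)
qed (use breakpoints_ordered in \<open>auto simp: dens_def\<close>)

lemma dens_has_integral_initial_segment:
  assumes "l2 \<rho> \<alpha> \<theta> \<le> x" "x \<le> r2 \<rho> \<alpha> \<theta>"
  shows "(dens \<rho> \<alpha> \<theta> has_integral (2-\<alpha>) * l1 \<rho> \<alpha> \<theta> + \<rho>/2 + \<alpha> * (x - l2 \<rho> \<alpha> \<theta>)) {0..x}"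
proof -
  have left: "(dens \<rho> \<alpha> \<theta> has_integral (2-\<alpha>) * l1 \<rho> \<alpha> \<theta> + \<rho>/2) {0..l2 \<rho> \<alpha> \<theta>}"
    by (rule has_integral_combine[OF _ _ dens_has_integral_left_plateau dens_has_integral_left_bump])
      (use breakpoints_ordered in auto)
  show ?thesis
    by (rule has_integral_combine[OF _ _ left dens_has_integral_middle[OF assms]])
      (use breakpoints_ordered assms in auto)
qed

lemma dens_has_integral_atMost:
  assumes "l2 \<rho> \<alpha> \<theta> \<le> x" "x \<le> r2 \<rho> \<alpha> \<theta>"
  shows "(dens \<rho> \<alpha> \<theta> has_integral (2-\<alpha>) * l1 \<rho> \<alpha> \<theta> + \<rho>/2 + \<alpha> * (x - l2 \<rho> \<alpha> \<theta>)) {..x}"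
proof -
  have "(\<lambda>X. if X \<in> {0..x} then dens \<rho> \<alpha> \<theta> X else 0) = (\<lambda>X. if X \<in> {..x} then dens \<rho> \<alpha> \<theta> X else 0)"
    by (auto simp: dens_eq_0)
  then show ?thesis
    using has_integral_restrict_UNIV[THEN iffD2, OF dens_has_integral_initial_segment[OF assms]]
    by (simp only: has_integral_restrict_UNIV)
qed

lemma dens_has_integral_UNIV: "(dens \<rho> \<alpha> \<theta> has_integral 1) UNIV"
proof -
  have "(dens \<rho> \<alpha> \<theta> has_integral (2-\<alpha>) * l1 \<rho> \<alpha> \<theta> + \<rho>/2 + \<alpha> * (r2 \<rho> \<alpha> \<theta> - l2 \<rho> \<alpha> \<theta>)
      + (1-\<rho>)/2) {0..r1 \<rho> \<alpha> \<theta>}"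
    using breakpoints_ordered by (intro has_integral_combine[OF _ _ dens_has_integral_initial_segment[of "r2 \<rho> \<alpha> \<theta>"]
        dens_has_integral_right_bump]) auto
  then have "(dens \<rho> \<alpha> \<theta> has_integral (2-\<alpha>) * l1 \<rho> \<alpha> \<theta> + \<rho>/2 + \<alpha> * (r2 \<rho> \<alpha> \<theta> - l2 \<rho> \<alpha> \<theta>)
      + (1-\<rho>)/2 + (2-\<alpha>) * (1 - r1 \<rho> \<alpha> \<theta>)) {0..1}"
    using breakpoints_ordered by (intro has_integral_combine[OF _ _ _ dens_has_integral_right_plateau]) auto
  moreover have "(2-\<alpha>) * l1 \<rho> \<alpha> \<theta> + \<rho>/2 + \<alpha> * (r2 \<rho> \<alpha> \<theta> - l2 \<rho> \<alpha> \<theta>)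
      + (1-\<rho>)/2 + (2-\<alpha>) * (1 - r1 \<rho> \<alpha> \<theta>) = 1"
  proof -
    have "r2 \<rho> \<alpha> \<theta> - l2 \<rho> \<alpha> \<theta> = 1/4" "1 - r1 \<rho> \<alpha> \<theta> = 1/4 - l1 \<rho> \<alpha> \<theta>"
      unfolding r1_def r2_def l2_def by (simp_all add: field_simps)
    then show ?thesis by (simp only:) (simp add: field_simps)
  qed
  ultimately have "(dens \<rho> \<alpha> \<theta> has_integral 1) {0..1}" by simp
  then show ?thesis by (rule has_integral_on_superset) (auto simp: dens_eq_0)
qed

lemma x_opt_minus_l2: "x_opt \<rho> \<alpha> \<theta> - l2 \<rho> \<alpha> \<theta> = 1/8 - (2/\<alpha> - 1) * \<theta>"
  unfolding x_opt_def l2_def l1_def by (simp add: algebra_simps)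

lemma x_opt_between: "x_opt \<rho> \<alpha> \<theta> \<in> {l2 \<rho> \<alpha> \<theta> .. r2 \<rho> \<alpha> \<theta>}"
proof -
  have "0 \<le> 2/\<alpha> - 1" using params by (simp add: field_simps)
  then have "\<bar>(2/\<alpha> - 1) * \<theta>\<bar> = (2/\<alpha> - 1) * \<bar>\<theta>\<bar>" by (simp add: abs_mult)
  also have "\<dots> \<le> (2/\<alpha>) * (\<alpha>/20)"
    using params by (intro mult_mono) auto
  finally have "\<bar>(2/\<alpha> - 1) * \<theta>\<bar> \<le> 1/10" using params by simp
  then show ?thesis using x_opt_minus_l2 unfolding r2_def by (auto simp: abs_le_iff)
qed

lemma dens_has_integral_atMost_x_opt: "(dens \<rho> \<alpha> \<theta> has_integral \<rho>) {..x_opt \<rho> \<alpha> \<theta>}"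
proof -
  have "(2-\<alpha>) * l1 \<rho> \<alpha> \<theta> = (4*\<rho> - \<alpha>)/8 + (2-\<alpha>)*\<theta>"
    using params unfolding l1_def by (simp add: field_simps)
  moreover have "\<alpha> * (x_opt \<rho> \<alpha> \<theta> - l2 \<rho> \<alpha> \<theta>) = \<alpha>/8 - (2-\<alpha>)*\<theta>"
    using params unfolding x_opt_minus_l2 by (simp add: field_simps)
  ultimately have "(2-\<alpha>) * l1 \<rho> \<alpha> \<theta> + \<rho>/2 + \<alpha> * (x_opt \<rho> \<alpha> \<theta> - l2 \<rho> \<alpha> \<theta>) = \<rho>"
    by (simp add: field_simps)
  then show ?thesis using dens_has_integral_atMost[of "x_opt \<rho> \<alpha> \<theta>"] x_opt_between by simp
qed

end

theorem lemma3:
  fixes h b \<rho> \<alpha> \<theta> :: real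
  assumes "h > 0" and "b > 0" and "\<rho> = b / (h + b)"
    and "0 < \<alpha>" and "\<alpha> \<le> 1/2" and "\<alpha> \<le> 2*\<rho>" and "\<alpha> \<le> 2*(1-\<rho>)"
    and "\<theta> \<in> {-\<alpha>/20 .. \<alpha>/20}"
  shows "(\<forall>x. (\<forall>y. cost h b \<rho> \<alpha> \<theta> x \<le> cost h b \<rho> \<alpha> \<theta> y) \<longleftrightarrow>
              x = \<rho>/2 + (4*\<rho> - \<alpha>)/(16 - 8*\<alpha>) + 1/8 - (2/\<alpha> - 2)*\<theta>)
         \<and> \<rho>/2 + (4*\<rho> - \<alpha>)/(16 - 8*\<alpha>) + 1/8 - (2/\<alpha> - 2)*\<theta> \<in> {l2 \<rho> \<alpha> \<theta> .. r2 \<rho> \<alpha> \<theta>}"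
proof -
  have params: "0 < \<alpha>" "\<alpha> \<le> 1/2" "\<alpha> \<le> 2*\<rho>" "\<alpha> \<le> 2*(1-\<rho>)" "\<bar>\<theta>\<bar> \<le> \<alpha>/20"
    using assms(4-8) by (auto simp: abs_le_iff)
  have between: "x_opt \<rho> \<alpha> \<theta> \<in> {l2 \<rho> \<alpha> \<theta> .. r2 \<rho> \<alpha> \<theta>}"
    by (rule x_opt_between[OF params])
  then have inside: "0 < x_opt \<rho> \<alpha> \<theta>" "x_opt \<rho> \<alpha> \<theta> < 1"
    using breakpoints_ordered[OF params] by auto
  have strict: "cost h b \<rho> \<alpha> \<theta> (x_opt \<rho> \<alpha> \<theta>) < cost h b \<rho> \<alpha> \<theta> y" if "y \<noteq> x_opt \<rho> \<alpha> \<theta>" for y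
    unfolding cost_eq_integral_nv_loss
  proof (rule newsvendor_quantile_unique_minimizer[where lo = 0 and hi = 1 and c = \<alpha>])
    show "(dens \<rho> \<alpha> \<theta> has_integral b / (h + b)) {..x_opt \<rho> \<alpha> \<theta>}"
      using dens_has_integral_atMost_x_opt[OF params] assms(3) by simp
    show "integrable lborel (\<lambda>X. dens \<rho> \<alpha> \<theta> X * nv_loss h b z X)" for z
      by (rule integrable_bounded_density_nv_loss[where M = 2 and a = 0 and c = 1])
        (use dens_measurable dens_bounds[OF params] dens_eq_0 in auto)
  qed (use assms params inside that dens_bounds[OF params] dens_ge_alpha[OF params]
      dens_has_integral_UNIV[OF params] in auto)
  have "(\<forall>y. cost h b \<rho> \<alpha> \<theta> x \<le> cost h b \<rho> \<alpha> \<theta> y) \<longleftrightarrow> x = x_opt \<rho> \<alpha> \<theta>" for x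
    using strict by (metis less_le_not_le order_refl)
  then show ?thesis using between unfolding x_opt_def by simp
qed

end
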